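(* Let $q\in(0,1)$ and let $N$ be a positive integer. For any $s\in\mathbb{C}$ and any $t\in\mathbb{C}\setminus\{a+2\pi i b/\log q : a,b\in\mathbb{Z},\ a\le 0\}$, we have $$(1-q)^{-s}\zeta_q(s,t)=\sum_{m=1}^{N-1}\frac{q^{mt}}{(1-q^m)^s}+\sum_{r=0}^{\infty}\binom{r+s-1}{r}\frac{q^{N(t+r)}}{1-q^{t+r}}.$$
   Context: For $q\in(0,1)$, $[m]_q=\frac{1-q^m}{1-q}$ and $q^w=e^{w\log q}$. $\zeta_q(s,t)=\sum_{m=1}^\infty q^{mt}[m]_q^{-s}$ for $\Re(t)>0$, extended meromorphically to $\mathbb{C}^2$. For complex $s$ and integer $r\ge0$, $\binom{r+s-1}{r}=\frac{s(s+1)\cdots(s+r-1)}{r!}=\frac{\Gamma(r+s)}{r!\,\Gamma(s)}$ (equal to $1$ for $r=0$). Complex powers $(1-q^m)^{s}$ use the real logarithm of the positive number $1-q^m$. *)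

theory Defs
  imports "HOL-Complex_Analysis.Complex_Analysis"
begin

definition rpow :: "real \<Rightarrow> complex \<Rightarrow> complex" where
  "rpow x w = exp (w * complex_of_real (ln x))"

definition qint :: "real \<Rightarrow> nat \<Rightarrow> real" where
  "qint q m = (1 - q ^ m) / (1 - q)"

text \<open>The defining series of zeta_q(s,t), valid for Re t > 0.\<close>
definition zeta_q_series :: "real \<Rightarrow> complex \<Rightarrow> complex \<Rightarrow> complex" where
  "zeta_q_series q s t = (\<Sum>m. rpow q (of_nat (Suc m) * t) * rpow (qint q (Suc m)) (- s))"

definition zeta_q_poles :: "real \<Rightarrow> complex set" where
  "zeta_q_poles q = {of_int a + 2 * of_real pi * \<i> * of_int b / of_real (ln q) | a b. a \<le> 0}"

text \<open>Meromorphic continuation of zeta_q(s,t) in t (for fixed s): the value at t of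
  the function holomorphic on the complement of the pole set that agrees with the
  series on the half-plane Re t > 0 (unique by the identity theorem).\<close>
definition zeta_q :: "real \<Rightarrow> complex \<Rightarrow> complex \<Rightarrow> complex" where
  "zeta_q q s t = (THE z. \<exists>g. g holomorphic_on (- zeta_q_poles q) \<and>
      (\<forall>u. 0 < Re u \<longrightarrow> g u = zeta_q_series q s u) \<and> g t = z)"

text \<open>Generalized binomial coefficient binom(r+s-1, r) = s(s+1)...(s+r-1)/r!.\<close>
definition gbinom :: "complex \<Rightarrow> nat \<Rightarrow> complex" where
  "gbinom s r = pochhammer s r / of_nat (fact r)"

end

theory Submission
  imports Defs
begin

text \<open>For Re t > 0 write [m]_q^(-s) = (1 - q)^s (1 - q^m)^(-s) and expand (1 - q^m)^(-s) by the
  binomial series. The double series over m >= 1, r >= 0 converges absolutely; summing first over m,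
  a geometric series in q^(t+r), gives
  (1 - q)^(-s) zeta_q(s,t) = sum_r binom(r+s-1,r) q^(t+r) / (1 - q^(t+r)).
  The right-hand side converges locally uniformly off the poles, so it is holomorphic there and, by
  the identity theorem, equals the continuation of zeta_q at every admissible t. Finally
  x^N / (1 - x) = x / (1 - x) - (x + ... + x^(N-1)), and for x = q^(t+r) each x^m summed against
  the binomial coefficients is again a binomial series, with value q^(mt) (1 - q^m)^(-s).\<close>

lemma rpow_add: "rpow x (a + b) = rpow x a * rpow x b"
  unfolding rpow_def by (simp add: distrib_right exp_add)

lemma rpow_of_nat_mult: "rpow x (of_nat n * w) = rpow x w ^ n"
  unfolding rpow_def by (simp add: mult.assoc exp_of_nat_mult)

lemma norm_rpow: "norm (rpow x w) = exp (Re w * ln x)"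
  unfolding rpow_def by (simp add: norm_exp_eq_Re)

lemma rpow_of_nat: "0 < x \<Longrightarrow> rpow x (of_nat n) = of_real x ^ n"
  using rpow_of_nat_mult[of x n 1] by (simp add: rpow_def exp_of_real)

lemma rpow_minus: "rpow x (- w) = inverse (rpow x w)"
  unfolding rpow_def by (simp add: exp_minus)

lemma rpow_nonzero: "rpow x w \<noteq> 0"
  unfolding rpow_def by simp

lemma rpow_divide: "0 < x \<Longrightarrow> 0 < y \<Longrightarrow> rpow (x / y) w = rpow x w / rpow y w"
  unfolding rpow_def by (simp add: ln_div right_diff_distrib exp_diff)

lemma exp_add_of_nat_mult_ln: "0 < q \<Longrightarrow> exp ((c + real r) * ln q) = exp (c * ln q) * q ^ r"
  by (simp add: distrib_right exp_add exp_of_nat_mult)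

lemma gbinom_eq_gchoose: "gbinom s r = (-1) ^ r * ((- s) gchoose r)"
  unfolding gbinom_def gbinomial_pochhammer
  by (simp add: field_simps flip: power_mult_distrib)

lemma sums_gbinom_power:
  fixes x :: real
  assumes "0 \<le> x" "x < 1"
  shows "(\<lambda>r. gbinom s r * of_real x ^ r) sums rpow (1 - x) (- s)"
proof -
  have "(\<lambda>r. ((- s) gchoose r) * (- of_real x) ^ r) sums (1 + - of_real x) powr (- s)"
    using assms by (intro gen_binomial_complex) simp
  moreover have "(1 + - of_real x :: complex) powr (- s) = rpow (1 - x) (- s)"
    using assms unfolding rpow_def powr_def by (simp flip: Ln_of_real)
  ultimately show ?thesis
    by (simp add: gbinom_eq_gchoose power_minus' mult_ac)
qed

lemma pochhammer_nonneg: "0 \<le> (x::real) \<Longrightarrow> 0 \<le> pochhammer x n"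
  by (induction n) (auto simp: pochhammer_Suc)

lemma norm_pochhammer_le: "norm (pochhammer (s::complex) r) \<le> pochhammer (norm s) r"
proof (induction r)
  case 0
  then show ?case by simp
next
  case (Suc r)
  have "norm (pochhammer s (Suc r)) = norm (pochhammer s r) * norm (s + of_nat r)"
    by (simp add: pochhammer_Suc norm_mult)
  also have "\<dots> \<le> pochhammer (norm s) r * (norm s + of_nat r)"
    using Suc.IH norm_triangle_ineq[of s "of_nat r"]
    by (intro mult_mono) (auto simp: pochhammer_nonneg)
  finally show ?case by (simp add: pochhammer_Suc)
qed

text \<open>The binomial series for the real parameter \<open>norm s\<close> dominates the one for \<open>s\<close>.\<close>

lemma summable_norm_gbinom_power:
  fixes q :: real
  assumes "0 \<le> q" "q < 1"
  shows "summable (\<lambda>r. norm (gbinom s r) * q ^ r)"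
proof (rule summable_comparison_test'[where N = 0])
  have "summable (\<lambda>r. gbinom (of_real (norm s)) r * of_real q ^ r)"
    using sums_gbinom_power[OF assms] by (rule sums_summable)
  moreover have "gbinom (of_real (norm s)) r * of_real q ^ r
      = of_real (pochhammer (norm s) r / fact r * q ^ r)" for r
    unfolding gbinom_def by (simp add: pochhammer_of_real)
  ultimately show "summable (\<lambda>r. pochhammer (norm s) r / fact r * q ^ r)"
    using summable_of_real_iff by (metis (no_types, lifting) ext)
  show "norm (norm (gbinom s r) * q ^ r) \<le> pochhammer (norm s) r / fact r * q ^ r" for r
    unfolding gbinom_def using assms norm_pochhammer_le[of s r]
    by (auto simp: norm_divide intro!: mult_right_mono divide_right_mono)
qed

lemma sums_gbinom_rpow_power:
  fixes q :: real
  assumes q: "0 < q" "q < 1" and m: "1 \<le> m"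
  shows "(\<lambda>r. gbinom s r * rpow q (t + of_nat r) ^ m)
           sums (rpow q (of_nat m * t) * rpow (1 - q ^ m) (- s))"
proof -
  have qm: "0 \<le> q ^ m" "q ^ m < 1"
    using q m by (auto simp: power_less_one_iff)
  have "rpow q (t + of_nat r) ^ m = rpow q (of_nat m * t + of_nat (m * r))" for r
    by (simp add: rpow_of_nat_mult[symmetric] algebra_simps)
  also have "rpow q (of_nat m * t + of_nat (m * r)) = rpow q (of_nat m * t) * of_real (q ^ m) ^ r" for r
    using rpow_of_nat[OF q(1), of "m * r"] by (simp add: rpow_add power_mult)
  finally show ?thesis
    using sums_mult[OF sums_gbinom_power[OF qm], of "rpow q (of_nat m * t)" s]
    by (simp add: ac_simps)
qed

lemma sums_swap_if_summable_norm:
  fixes F :: "nat \<Rightarrow> nat \<Rightarrow> 'a::{banach, uniform_topological_group_add}"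
  assumes rows: "\<And>r. F r sums a r"
    and row_norms: "\<And>r. (\<lambda>m. norm (F r m)) sums G r"
    and "summable G"
    and columns: "\<And>m. (\<lambda>r. F r m) sums b m"
  shows "b sums (\<Sum>r. a r)"
proof -
  define F' where "F' = (\<lambda>(r, m). F r m)"
  have "(\<lambda>p. norm (F' p)) summable_on UNIV \<times> UNIV"
  proof (rule summable_on_SigmaI)
    show "((\<lambda>m. norm (F' (r, m))) has_sum G r) UNIV" for r
      using row_norms by (intro sums_nonneg_imp_has_sum) (auto simp: F'_def)
    have "G r \<ge> 0" for r
      using sums_le[OF _ sums_zero row_norms[of r]] by simp
    then show "G summable_on UNIV"
      using \<open>summable G\<close> by (intro norm_summable_imp_summable_on) simp
  qed simp
  then obtain I where I: "(F' has_sum I) (UNIV \<times> UNIV)"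
    using abs_summable_summable by (blast intro: has_sum_infsum)
  have a_sum: "(a has_sum I) UNIV"
  proof (rule has_sum_Sigma'[where f = F'])
    show "((\<lambda>m. F' (r, m)) has_sum a r) UNIV" for r
      using row_norms rows unfolding F'_def
      by (intro norm_summable_imp_has_sum) (auto intro: sums_summable)
  qed (use I in simp)
  have swapped: "((\<lambda>(m, r). F r m) has_sum I) (UNIV \<times> UNIV)"
    using has_sum_swap[THEN iffD1, OF I] by (simp add: F'_def)
  have columns_summable: "(\<lambda>r. F r m) summable_on UNIV" for m
    using summable_on_SigmaD1[OF has_sum_imp_summable[OF swapped] UNIV_I] .
  have columns_has_sum: "((\<lambda>r. F r m) has_sum b m) UNIV" for m
  proof -
    have "((\<lambda>r. F r m) has_sum infsum (\<lambda>r. F r m) UNIV) UNIV"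
      using columns_summable by (rule has_sum_infsum)
    moreover have "infsum (\<lambda>r. F r m) UNIV = b m"
      using sums_unique2[OF has_sum_imp_sums[OF calculation] columns] .
    ultimately show ?thesis by simp
  qed
  have "(b has_sum I) UNIV"
    using swapped by (rule has_sum_Sigma') (simp add: columns_has_sum)
  moreover have "(\<Sum>r. a r) = I"
    using has_sum_imp_sums[OF a_sum] by (rule sums_unique[symmetric])
  ultimately show ?thesis
    by (simp add: has_sum_imp_sums)
qed

lemma zeta_q_poles_eq:
  fixes q :: real
  assumes "0 < q" "q < 1"
  shows "zeta_q_poles q = Re -` (\<int> \<inter> {..0}) \<inter> (\<lambda>z. Im z * ln q / (2 * pi)) -` \<int>"
proof -
  have lq: "ln q < 0" using assms by simp
  have Re_pole: "Re (of_int a + 2 * of_real pi * \<i> * of_int b / of_real (ln q)) = of_int a"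
    and Im_pole: "Im (of_int a + 2 * of_real pi * \<i> * of_int b / of_real (ln q)) = 2 * pi * of_int b / ln q"
    for a b :: int
    by (simp_all add: Re_divide Im_divide power2_eq_square)
  show ?thesis
  proof (intro equalityI subsetI)
    fix z assume "z \<in> zeta_q_poles q"
    then obtain a b where "z = of_int a + 2 * of_real pi * \<i> * of_int b / of_real (ln q)" "a \<le> 0"
      unfolding zeta_q_poles_def by blast
    then show "z \<in> Re -` (\<int> \<inter> {..0}) \<inter> (\<lambda>z. Im z * ln q / (2 * pi)) -` \<int>"
      using lq by (simp add: Re_pole Im_pole)
  next
    fix z assume "z \<in> Re -` (\<int> \<inter> {..0}) \<inter> (\<lambda>z. Im z * ln q / (2 * pi)) -` \<int>"
    then obtain a b where a: "Re z = of_int a" "a \<le> 0" and b: "Im z * ln q / (2 * pi) = of_int b"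
      by (auto elim!: Ints_cases)
    moreover have "z = of_int a + 2 * of_real pi * \<i> * of_int b / of_real (ln q)"
      using a b lq by (simp add: complex_eq_iff Re_pole Im_pole field_simps)
    ultimately show "z \<in> zeta_q_poles q"
      unfolding zeta_q_poles_def by blast
  qed
qed

lemma closed_zeta_q_poles: "0 < q \<Longrightarrow> q < 1 \<Longrightarrow> closed (zeta_q_poles q)"
  unfolding zeta_q_poles_eq
  by (intro closed_Int closed_vimage closed_atMost closed_Ints continuous_intros) auto

lemma countable_zeta_q_poles: "countable (zeta_q_poles q)"
proof (rule countable_subset)
  show "zeta_q_poles q \<subseteq> (\<lambda>(a::int, b::int). of_int a + 2 * of_real pi * \<i> * of_int b / of_real (ln q)) ` UNIV"
    unfolding zeta_q_poles_def by auto
qed simp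

lemma connected_compl_zeta_q_poles: "connected (- zeta_q_poles q)"
  using connected_open_diff_countable[of UNIV "zeta_q_poles q"] countable_zeta_q_poles
  by (simp add: Compl_eq_Diff_UNIV connected_UNIV)

lemma Re_le_zero_if_zeta_q_poles: "z \<in> zeta_q_poles q \<Longrightarrow> Re z \<le> 0"
  unfolding zeta_q_poles_def by (auto simp: Re_divide)

lemma rpow_add_of_nat_neq_1:
  fixes q :: real
  assumes "0 < q" "q < 1" "t \<notin> zeta_q_poles q"
  shows "rpow q (t + of_nat r) \<noteq> 1"
proof
  assume "rpow q (t + of_nat r) = 1"
  then obtain n :: int where n: "Re ((t + of_nat r) * of_real (ln q)) = 0"
     "Im ((t + of_nat r) * of_real (ln q)) = of_int (2 * n) * pi"
    unfolding rpow_def exp_eq_1 by blast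
  have "ln q < 0" using assms by simp
  with n have "Re t = - real r" "Im t * ln q / (2 * pi) = of_int n"
    by simp_all
  then have "t \<in> zeta_q_poles q"
    unfolding zeta_q_poles_eq[OF assms(1,2)] by (auto intro!: Ints_minus)
  with assms show False by simp
qed

lemma zeta_q_eqI:
  fixes q :: real
  assumes "0 < q" "q < 1" and g: "g holomorphic_on - zeta_q_poles q"
    and g_series: "\<And>u. 0 < Re u \<Longrightarrow> g u = zeta_q_series q s u"
    and t: "t \<notin> zeta_q_poles q"
  shows "zeta_q q s t = g t"
  unfolding zeta_q_def
proof (rule the_equality)
  show "\<exists>g'. g' holomorphic_on - zeta_q_poles q \<and> (\<forall>u. 0 < Re u \<longrightarrow> g' u = zeta_q_series q s u) \<and> g' t = g t"
    using g g_series by blast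
next
  fix z
  assume "\<exists>g'. g' holomorphic_on - zeta_q_poles q \<and> (\<forall>u. 0 < Re u \<longrightarrow> g' u = zeta_q_series q s u) \<and> g' t = z"
  then obtain g' where g': "g' holomorphic_on - zeta_q_poles q"
    "\<And>u. 0 < Re u \<Longrightarrow> g' u = zeta_q_series q s u" "g' t = z"
    by blast
  have half_plane: "{u. 0 < Re u} \<subseteq> - zeta_q_poles q"
    using Re_le_zero_if_zeta_q_poles by fastforce
  have "g' t = g t"
  proof (rule analytic_continuation_open[OF _ _ _ connected_compl_zeta_q_poles half_plane g'(1) g])
    show "open {u. 0 < Re u}" by (rule open_halfspace_Re_gt)
    show "open (- zeta_q_poles q)" using closed_zeta_q_poles assms(1,2) by blast
  qed (use g'(2) g_series t in \<open>auto intro!: exI[of _ 1]\<close>)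
  then show "z = g t" using g'(3) by simp
qed

definition zeta_q_binom_term :: "real \<Rightarrow> complex \<Rightarrow> nat \<Rightarrow> complex \<Rightarrow> complex" where
  "zeta_q_binom_term q s r u = gbinom s r * rpow q (u + of_nat r) / (1 - rpow q (u + of_nat r))"

lemma holomorphic_zeta_q_binom_term:
  fixes q :: real
  assumes "0 < q" "q < 1"
  shows "zeta_q_binom_term q s r holomorphic_on - zeta_q_poles q"
proof -
  have "1 - exp ((u + of_nat r) * of_real (ln q)) \<noteq> 0" if "u \<in> - zeta_q_poles q" for u
    using rpow_add_of_nat_neq_1[OF assms, of u r] that unfolding rpow_def by force
  then show ?thesis
    unfolding zeta_q_binom_term_def[abs_def] rpow_def by (intro holomorphic_intros) auto
qed

lemma norm_zeta_q_binom_term_le: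
  fixes q c :: real
  assumes q: "0 < q" "q < 1" and "c < Re u" and small: "exp (c * ln q) * q ^ r \<le> 1/2"
  shows "norm (zeta_q_binom_term q s r u) \<le> 2 * exp (c * ln q) * (norm (gbinom s r) * q ^ r)"
proof -
  let ?x = "rpow q (u + of_nat r)"
  have "norm ?x = exp ((Re u + real r) * ln q)"
    by (simp add: norm_rpow)
  also have "\<dots> \<le> exp ((c + real r) * ln q)"
    using assms by (auto intro: mult_right_mono_neg)
  also have "\<dots> = exp (c * ln q) * q ^ r"
    using q(1) by (rule exp_add_of_nat_mult_ln)
  finally have x: "norm ?x \<le> exp (c * ln q) * q ^ r" .
  moreover have "1/2 \<le> norm (1 - ?x)"
    using norm_triangle_ineq2[of 1 ?x] x small by simp
  ultimately have "norm (zeta_q_binom_term q s r u) \<le> norm (gbinom s r) * (exp (c * ln q) * q ^ r) / (1/2)"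
    unfolding zeta_q_binom_term_def norm_mult norm_divide
    using q by (intro frac_le mult_left_mono) auto
  then show ?thesis by (simp add: mult_ac)
qed

lemma zeta_q_binom_series_holomorphic:
  fixes q :: real
  assumes q: "0 < q" "q < 1"
  obtains g where "g holomorphic_on - zeta_q_poles q"
    and "\<And>u. u \<notin> zeta_q_poles q \<Longrightarrow> (\<lambda>r. zeta_q_binom_term q s r u) sums g u"
proof -
  let ?S = "- zeta_q_poles q"
  have S: "open ?S" using closed_zeta_q_poles[OF q] by blast
  have local_bound: "\<exists>d h. 0 < d \<and> summable h \<and>
      (\<forall>\<^sub>F r in sequentially. \<forall>y\<in>ball x d \<inter> ?S. norm (zeta_q_binom_term q s r y) \<le> h r)" for x
  proof (intro exI conjI)
    define K where "K = exp ((Re x - 1) * ln q)"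
    have "(\<lambda>r. K * q ^ r) \<longlonglongrightarrow> 0"
      using q by (intro tendsto_mult_right_zero LIMSEQ_power_zero) auto
    then have "\<forall>\<^sub>F r in sequentially. K * q ^ r \<le> 1/2"
      by (rule order_tendstoD(2)[where a = "1/2", THEN eventually_mono]) auto
    moreover have "Re x - 1 < Re y" if "y \<in> ball x 1" for y
      using that abs_Re_le_cmod[of "x - y"] by (auto simp: dist_norm)
    ultimately show "\<forall>\<^sub>F r in sequentially. \<forall>y\<in>ball x 1 \<inter> ?S.
        norm (zeta_q_binom_term q s r y) \<le> 2 * K * (norm (gbinom s r) * q ^ r)"
      unfolding K_def by (auto elim!: eventually_mono intro!: norm_zeta_q_binom_term_le[OF q])
    show "summable (\<lambda>r. 2 * K * (norm (gbinom s r) * q ^ r))"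
      using q by (intro summable_mult summable_norm_gbinom_power) auto
  qed simp
  have "\<exists>g g'. \<forall>u\<in>?S. (\<lambda>r. zeta_q_binom_term q s r u) sums g u \<and>
      (\<lambda>r. deriv (zeta_q_binom_term q s r) u) sums g' u \<and> (g has_field_derivative g' u) (at u)"
  proof (rule series_and_derivative_comparison_local[OF S])
    show "(zeta_q_binom_term q s r has_field_derivative deriv (zeta_q_binom_term q s r) u) (at u)"
      if "u \<in> ?S" for r u
      using holomorphic_zeta_q_binom_term[OF q] S that by (rule holomorphic_derivI)
  qed (rule local_bound)
  then obtain g g' where g: "\<And>u. u \<in> ?S \<Longrightarrow>
      (\<lambda>r. zeta_q_binom_term q s r u) sums g u \<and> (g has_field_derivative g' u) (at u)"
    by blast
  show ?thesis
  proof
    show "g holomorphic_on ?S"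
      using g S by (auto simp: holomorphic_on_open)
  qed (use g in auto)
qed

lemma zeta_q_series_eq_binom_series:
  fixes q :: real
  assumes q: "0 < q" "q < 1" and u: "0 < Re u"
  shows "zeta_q_series q s u = rpow (1 - q) s * (\<Sum>r. zeta_q_binom_term q s r u)"
proof -
  define x where "x r = rpow q (u + of_nat r)" for r
  define e where "e = exp (Re u * ln q)"
  have e: "0 < e" "e < 1"
    unfolding e_def using q u by (auto simp: mult_pos_neg)
  have norm_x: "norm (x r) = e * q ^ r" for r
    unfolding x_def e_def norm_rpow using exp_add_of_nat_mult_ln[OF q(1), of "Re u" r] by simp
  have e_power_le: "e * q ^ r \<le> e" for r
    using e q mult_left_le[of "q ^ r" e] by (simp add: power_le_one)
  have e_power_less: "e * q ^ r < 1" for r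
    using e e_power_le[of r] by linarith
  define b where "b m = rpow q (of_nat (Suc m) * u) * rpow (1 - q ^ Suc m) (- s)" for m
  have "b sums (\<Sum>r. zeta_q_binom_term q s r u)"
  proof (rule sums_swap_if_summable_norm[where F = "\<lambda>r m. gbinom s r * x r ^ Suc m"])
    show "(\<lambda>m. gbinom s r * x r ^ Suc m) sums zeta_q_binom_term q s r u" for r
      using sums_mult[OF geometric_sums, of "x r" "gbinom s r * x r"] norm_x e_power_less
      unfolding zeta_q_binom_term_def x_def by (simp add: mult_ac)
    show "(\<lambda>m. norm (gbinom s r * x r ^ Suc m))
        sums (norm (gbinom s r) * (e * q ^ r) / (1 - e * q ^ r))" for r
      using sums_mult[OF geometric_sums, of "e * q ^ r" "norm (gbinom s r) * (e * q ^ r)"]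
        e_power_less e q
      by (simp add: norm_mult norm_power norm_x mult_ac)
    show "summable (\<lambda>r. norm (gbinom s r) * (e * q ^ r) / (1 - e * q ^ r))"
    proof (rule summable_comparison_test'[where N = 0])
      show "summable (\<lambda>r. e / (1 - e) * (norm (gbinom s r) * q ^ r))"
        using q by (intro summable_mult summable_norm_gbinom_power) auto
      show "norm (norm (gbinom s r) * (e * q ^ r) / (1 - e * q ^ r))
          \<le> e / (1 - e) * (norm (gbinom s r) * q ^ r)" for r
      proof -
        have "norm (norm (gbinom s r) * (e * q ^ r) / (1 - e * q ^ r))
            = norm (gbinom s r) * (e * q ^ r / (1 - e * q ^ r))"
          using e q e_power_less[of r] by simp
        also have "\<dots> \<le> norm (gbinom s r) * (e * q ^ r / (1 - e))"
          using e q e_power_le[of r] by (intro mult_left_mono frac_le) auto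
        finally show ?thesis by (simp add: mult_ac)
      qed
    qed
    show "(\<lambda>r. gbinom s r * x r ^ Suc m) sums b m" for m
      unfolding x_def b_def using sums_gbinom_rpow_power[OF q, of "Suc m" s u] by simp
  qed
  moreover have "rpow q (of_nat (Suc m) * u) * rpow (qint q (Suc m)) (- s) = rpow (1 - q) s * b m" for m
  proof -
    have "0 < 1 - q ^ Suc m" using q power_Suc_less_one[of q m] by simp
    then have "rpow (qint q (Suc m)) (- s) = rpow (1 - q ^ Suc m) (- s) / rpow (1 - q) (- s)"
      unfolding qint_def using q by (simp add: rpow_divide)
    then show ?thesis
      unfolding b_def rpow_minus[of "1 - q"] by (simp add: field_simps rpow_nonzero)
  qed
  ultimately show ?thesis
    unfolding zeta_q_series_def by (simp add: sums_unique[OF sums_mult])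
qed

lemma power_divide_one_minus_eq:
  fixes x :: "'a::field"
  assumes "x \<noteq> 1" "0 < N"
  shows "x ^ N / (1 - x) = x / (1 - x) - (\<Sum>m = 1..N - 1. x ^ m)"
proof -
  obtain n where N: "N = Suc n"
    using assms(2) gr0_implies_Suc by blast
  have "x ^ Suc k / (1 - x) = x / (1 - x) - (\<Sum>m = 1..k. x ^ m)" for k
  proof (induction k)
    case 0
    then show ?case by simp
  next
    case (Suc k)
    have "x ^ Suc (Suc k) / (1 - x) = x ^ Suc k / (1 - x) - x ^ Suc k"
      using assms(1) by (simp add: field_simps)
    then show ?case
      using Suc.IH by simp
  qed
  then show ?thesis
    unfolding N by simp
qed

lemma zeta_q_binom_series_sums:
  fixes q :: real
  assumes q: "0 < q" "q < 1" and t: "t \<notin> zeta_q_poles q"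
  shows "(\<lambda>r. zeta_q_binom_term q s r t) sums (rpow (1 - q) (- s) * zeta_q q s t)"
proof -
  obtain g where g_holomorphic: "g holomorphic_on - zeta_q_poles q"
    and g_sums: "\<And>u. u \<notin> zeta_q_poles q \<Longrightarrow> (\<lambda>r. zeta_q_binom_term q s r u) sums g u"
    using zeta_q_binom_series_holomorphic[OF q] by blast
  have "zeta_q q s t = rpow (1 - q) s * g t"
  proof (rule zeta_q_eqI[OF q _ _ t])
    show "(\<lambda>u. rpow (1 - q) s * g u) holomorphic_on - zeta_q_poles q"
      using g_holomorphic by (intro holomorphic_intros)
    show "rpow (1 - q) s * g u = zeta_q_series q s u" if "0 < Re u" for u
      using zeta_q_series_eq_binom_series[OF q that] g_sums[of u] Re_le_zero_if_zeta_q_poles[of u q] that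
      by (force simp: sums_unique)
  qed
  then show ?thesis
    using g_sums[OF t] by (simp add: rpow_minus rpow_nonzero mult.assoc[symmetric])
qed

theorem lemma2p1:
  fixes q :: real and N :: nat and s t :: complex
  assumes "0 < q" and "q < 1" and "0 < N"
    and "t \<notin> zeta_q_poles q"
  shows "(\<lambda>r. gbinom s r * rpow q (of_nat N * (t + of_nat r)) / (1 - rpow q (t + of_nat r)))
           sums (rpow (1 - q) (- s) * zeta_q q s t
                 - (\<Sum>m = 1..N - 1. rpow q (of_nat m * t) / rpow (1 - q ^ m) s))"
proof -
  note q = assms(1,2)
  have "(\<lambda>r. gbinom s r * rpow q (t + of_nat r) ^ m) sums (rpow q (of_nat m * t) / rpow (1 - q ^ m) s)"
    if "m \<in> {1..N - 1}" for m
    using sums_gbinom_rpow_power[OF q, of m s t] that by (simp add: rpow_minus divide_inverse)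
  then have finite_part: "(\<lambda>r. \<Sum>m = 1..N - 1. gbinom s r * rpow q (t + of_nat r) ^ m)
      sums (\<Sum>m = 1..N - 1. rpow q (of_nat m * t) / rpow (1 - q ^ m) s)"
    by (rule sums_sum)
  have "gbinom s r * rpow q (of_nat N * (t + of_nat r)) / (1 - rpow q (t + of_nat r))
      = zeta_q_binom_term q s r t - (\<Sum>m = 1..N - 1. gbinom s r * rpow q (t + of_nat r) ^ m)" for r
  proof -
    let ?x = "rpow q (t + of_nat r)"
    have "?x ^ N / (1 - ?x) = ?x / (1 - ?x) - (\<Sum>m = 1..N - 1. ?x ^ m)"
      using rpow_add_of_nat_neq_1[OF q assms(4)] assms(3) by (rule power_divide_one_minus_eq)
    then have "gbinom s r * (?x ^ N / (1 - ?x))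
        = gbinom s r * (?x / (1 - ?x)) - (\<Sum>m = 1..N - 1. gbinom s r * ?x ^ m)"
      by (simp add: right_diff_distrib sum_distrib_left)
    then show ?thesis
      unfolding zeta_q_binom_term_def rpow_of_nat_mult by simp
  qed
  then show ?thesis
    using sums_diff[OF zeta_q_binom_series_sums[OF q assms(4)] finite_part] by simp
qed

end
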